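(* Let $\alpha\in(0,1)$ and, for a map $\phi$ on $\mathbb T$ and $\Omega\in\mathbb R$, let $$G(\Omega,\phi)(w)=\operatorname{Im}\left\{\left(\Omega\phi(w)-C_\alpha\frac{1}{2\pi i}\int_{\mathbb T}\frac{\phi'(\tau)d\tau}{|\phi(w)-\phi(\tau)|^\alpha}\right)\overline w\,\overline{\phi'(w)}\right\},\quad w\in\mathbb T,$$ with $C_\alpha=\frac{\Gamma(\alpha/2)}{2^{1-\alpha}\Gamma(\frac{2-\alpha}2)}$. Then: (1) (discs) $G(\Omega,\mathrm{Id})\equiv0$ on $\mathbb T$ for every $\Omega\in\mathbb R$, i.e. discs are rotating patches with any angular velocity; (2) (ellipses) for every $Q\in(0,1)$ and $\phi_Q(w)=w+Q\overline w$ (the exterior conformal parametrization of an ellipse with semi-axes $a>b$, $Q=\frac{a-b}{a+b}$), there is no $\Omega\in\mathbb R$ with $G(\Omega,\phi_Q)\equiv0$ on $\mathbb T$; i.e. non-circular ellipses are not rotating patches of the generalized SQG equation.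
   Context: $\mathbb T$ is the unit circle, $\int_{\mathbb T}\dots d\tau$ the complex line integral, $\phi'=d\phi/dw$. The equation $G(\Omega,\phi)=0$ on $\mathbb T$ characterizes, for $\phi$ the exterior conformal map of a domain $D$ centered at $0$, that $\mathbf 1_D$ is a rotating patch with angular velocity $\Omega$ for the generalized SQG equation $\partial_t\theta+u\cdot\nabla\theta=0$, $u=-\nabla^\perp(-\Delta)^{-1+\frac\alpha2}\theta$. *)

theory Defs
  imports "HOL-Analysis.Analysis"
begin

definition C_alpha :: "real \<Rightarrow> real" where
  "C_alpha \<alpha> = Gamma (\<alpha> / 2) / (2 powr (1 - \<alpha>) * Gamma ((2 - \<alpha>) / 2))"

definition circle_integral :: "(complex \<Rightarrow> complex) \<Rightarrow> complex" where
  "circle_integral f = integral {0..2*pi} (\<lambda>t. f (cis t) * (\<i> * cis t))"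

definition G :: "real \<Rightarrow> real \<Rightarrow> (complex \<Rightarrow> complex) \<Rightarrow> complex \<Rightarrow> real" where
  "G \<alpha> \<Omega> \<phi> w =
     Im ((of_real \<Omega> * \<phi> w
          - of_real (C_alpha \<alpha>) * (1 / (2 * of_real pi * \<i>))
            * circle_integral (\<lambda>\<tau>. deriv \<phi> \<tau> / of_real (cmod (\<phi> w - \<phi> \<tau>) powr \<alpha>)))
         * cnj w * cnj (deriv \<phi> w))"

end

theory Submission
  imports Defs
begin

(*
  Writing w = e^{i theta} and tau = e^{it}, the contour integral in G becomes an integral
  over t in [0, 2 pi].
  Disc: for phi = id the imaginary part of the weighted integrand is, up to 1/(2 pi),
  sin(t - theta) / |1 - e^{i(t - theta)}|^alpha, an odd 2 pi-periodic function of t - theta,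
  so its integral vanishes; the rotation term Omega |w|^2 is real.
  Ellipse phi(z) = z + Q/z: the distance between two boundary points factors into a chord of
  the unit circle and a factor |1 - Q e^{-i(t + theta)}| >= 1 - Q, which makes the integrand
  integrable and gives
    G(e^{i theta}) = -2 Q Omega sin(2 theta) - C_alpha (1 - Q^2)/(2 pi) * int u(s, s + 2 theta) ds
  with u(s, v) = sin s / (|1 - e^{is}|^alpha |1 - Q e^{iv}|^alpha).  Adding the equations at
  theta = pi/8 and theta = 5 pi/8 eliminates Omega, so k(s) = u(s, s + pi/4) + u(s, s + 5 pi/4)
  has integral zero over a period, hence so has the sum M of its translates under the symmetries
  s, -s, pi - s, s + pi.  A monotonicity argument shows M <= 0 everywhere and M(pi/4) < 0,
  so by continuity its integral is negative: a contradiction.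
*)

subsection \<open>Integrals of periodic functions over a period\<close>

lemma periodic_integral_window_forward:
  fixes h :: "real \<Rightarrow> 'b::euclidean_space"
  assumes per: "\<And>x. h (x + p) = h x"
    and ab: "a \<le> b" "b \<le> a + p"
    and int: "h integrable_on {a..a+p}"
  shows "h integrable_on {b..b+p} \<and> integral {b..b+p} h = integral {a..a+p} h"
proof -
  have shift: "(\<lambda>x. h (x + p)) = h" using per by auto
  have next_period: "h integrable_on {a+p..a+2*p}"
    using integrable_shift_real_ivl_iff[of h p "a+p" "a+2*p"] int by (simp add: shift add.commute)
  have "h integrable_on {a..a+2*p}"
    by (rule Henstock_Kurzweil_Integration.integrable_combine[OF _ _ int next_period]) (use ab in auto)
  then have int_b: "h integrable_on {b..b+p}"
    by (rule integrable_on_subinterval) (use ab in auto)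
  have "integral {b..a+p} h + integral {a+p..b+p} h = integral {b..b+p} h"
    by (rule Henstock_Kurzweil_Integration.integral_combine) (use ab int_b in auto)
  moreover have "integral {a..b} h = integral {a+p..b+p} h"
    using integral_shift_real_ivl[of "a+p" p "b+p" h] by (simp add: shift)
  moreover have "integral {a..b} h + integral {b..a+p} h = integral {a..a+p} h"
    by (rule Henstock_Kurzweil_Integration.integral_combine) (use ab int in auto)
  ultimately have "integral {b..b+p} h = integral {a..a+p} h"
    by (metis add.commute)
  then show ?thesis using int_b by simp
qed

lemma periodic_integral_window:
  fixes h :: "real \<Rightarrow> 'b::euclidean_space"
  assumes per: "\<And>x. h (x + p) = h x"
    and ab: "\<bar>a - b\<bar> \<le> p"
    and int: "h integrable_on {a..a+p}"
  shows "h integrable_on {b..b+p} \<and> integral {b..b+p} h = integral {a..a+p} h"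
proof (cases "a \<le> b")
  case True
  then show ?thesis using periodic_integral_window_forward[of h p, OF per True _ int] ab by simp
next
  case False
  have shift: "(\<lambda>x. h (x + p)) = h" using per by auto
  have "h integrable_on {a-p..a}"
    using integrable_shift_real_ivl_iff[of h p a "a+p"] int by (simp add: shift)
  then have "h integrable_on {b..b+p} \<and> integral {b..b+p} h = integral {a-p..a-p+p} h"
    using False ab by (intro periodic_integral_window_forward[of h p, OF per]) auto
  moreover have "integral {a-p..a} h = integral {a..a+p} h"
    using integral_shift_real_ivl[of a p "a+p" h] by (simp add: shift)
  ultimately show ?thesis by simp
qed

lemma periodic_integral_translate:
  fixes h :: "real \<Rightarrow> 'b::euclidean_space"
  assumes per: "\<And>x. h (x + p) = h x"
    and c: "\<bar>c\<bar> \<le> p"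
    and int: "h integrable_on {0..p}"
  shows "(\<lambda>x. h (x + c)) integrable_on {0..p} \<and> integral {0..p} (\<lambda>x. h (x + c)) = integral {0..p} h"
proof -
  have "h integrable_on {c..c+p} \<and> integral {c..c+p} h = integral {0..0+p} h"
    using c int by (intro periodic_integral_window[of h p, OF per]) auto
  moreover have "(\<lambda>x. h (x + c)) integrable_on {c-c..(c+p)-c} \<longleftrightarrow> h integrable_on {c..c+p}"
    by (rule integrable_shift_real_ivl_iff)
  moreover have "integral {c-c..(c+p)-c} (\<lambda>x. h (x + c)) = integral {c..c+p} h"
    by (rule integral_shift_real_ivl)
  ultimately show ?thesis by simp
qed

lemma periodic_integral_reflect:
  fixes h :: "real \<Rightarrow> 'b::euclidean_space"
  assumes per: "\<And>x. h (x + p) = h x"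
    and p: "0 \<le> p"
    and int: "h integrable_on {0..p}"
  shows "(\<lambda>x. h (- x)) integrable_on {0..p} \<and> integral {0..p} (\<lambda>x. h (- x)) = integral {0..p} h"
proof -
  have "h integrable_on {-p..-p+p} \<and> integral {-p..-p+p} h = integral {0..0+p} h"
    using p int by (intro periodic_integral_window[of h p, OF per]) auto
  then have win: "h integrable_on {-p..-0} \<and> integral {-p..-0} h = integral {0..p} h" by simp
  moreover have "integral {-p..-0} h = integral {0..p} (\<lambda>x. h (- x))"
    using Henstock_Kurzweil_Integration.integral_reflect_real[of p 0 "\<lambda>x. h (-x)"] by simp
  moreover have "(\<lambda>x. h (- x)) integrable_on {0..p}"
    using win Henstock_Kurzweil_Integration.integrable_reflect_real[of h 0 "-p"] by simp
  ultimately show ?thesis by simp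
qed

lemma odd_periodic_integral_zero:
  fixes h :: "real \<Rightarrow> real"
  assumes per: "\<And>x. h (x + p) = h x"
    and odd: "\<And>x. h (- x) = - h x"
    and p: "0 \<le> p"
    and int: "h integrable_on {0..p}"
  shows "integral {0..p} h = 0"
proof -
  have "integral {0..p} (\<lambda>x. h (- x)) = integral {0..p} h"
    using periodic_integral_reflect[of h p, OF per p int] by simp
  then show ?thesis by (simp add: odd integral_neg)
qed

lemma periodic_integral_symmetrize:
  fixes h :: "real \<Rightarrow> real"
  assumes per: "\<And>x. h (x + 2*pi) = h x"
    and int: "h integrable_on {0..2*pi}"
  shows "(\<lambda>s. h s + h (- s) + h (pi - s) + h (s + pi)) integrable_on {0..2*pi}
    \<and> integral {0..2*pi} (\<lambda>s. h s + h (- s) + h (pi - s) + h (s + pi)) = 4 * integral {0..2*pi} h"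
proof -
  have refl: "(\<lambda>x. h (- x)) integrable_on {0..2*pi}" "integral {0..2*pi} (\<lambda>x. h (- x)) = integral {0..2*pi} h"
    using periodic_integral_reflect[of h "2*pi", OF per _ int] by auto
  have trans: "(\<lambda>x. h (x + pi)) integrable_on {0..2*pi}" "integral {0..2*pi} (\<lambda>x. h (x + pi)) = integral {0..2*pi} h"
    using periodic_integral_translate[of h "2*pi" pi, OF per _ int] by auto
  have per_refl: "h (- (x + 2*pi)) = h (- x)" for x
    using per[of "- (x + 2*pi)"] by simp
  have "(\<lambda>x. h (- (x + - pi))) integrable_on {0..2*pi}
      \<and> integral {0..2*pi} (\<lambda>x. h (- (x + - pi))) = integral {0..2*pi} (\<lambda>x. h (- x))"
    by (rule periodic_integral_translate[of "\<lambda>x. h (- x)" "2*pi", OF per_refl _ refl(1)]) auto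
  moreover have "(\<lambda>x. h (- (x + - pi))) = (\<lambda>x. h (pi - x))" by (simp add: algebra_simps)
  ultimately have rot: "(\<lambda>x. h (pi - x)) integrable_on {0..2*pi}" "integral {0..2*pi} (\<lambda>x. h (pi - x)) = integral {0..2*pi} h"
    using refl by auto
  show ?thesis
    using int refl trans rot by (simp add: integral_add integrable_add)
qed

lemma integral_neg_if_nonpos_and_neg_somewhere:
  fixes f :: "real \<Rightarrow> real"
  assumes int: "f integrable_on {a..b}" and cd: "a \<le> c" "c < d" "d \<le> b"
    and nonpos: "\<And>x. f x \<le> 0" and cont: "continuous_on {c..d} f"
    and x0: "c \<le> x0" "x0 \<le> d" "f x0 < 0"
  shows "integral {a..b} f < 0"
proof -
  have ic: "f integrable_on {a..c}" "f integrable_on {c..b}" "f integrable_on {c..d}" "f integrable_on {d..b}"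
    using int cd by (auto intro: integrable_on_subinterval)
  have "integral {a..c} f + integral {c..b} f = integral {a..b} f"
    using cd int by (intro Henstock_Kurzweil_Integration.integral_combine) auto
  moreover have "integral {c..d} f + integral {d..b} f = integral {c..b} f"
    using cd ic by (intro Henstock_Kurzweil_Integration.integral_combine) auto
  ultimately have split: "integral {a..b} f = integral {a..c} f + integral {c..d} f + integral {d..b} f"
    by simp
  have nonpos_parts: "integral {a..c} f \<le> 0" "integral {c..d} f \<le> 0" "integral {d..b} f \<le> 0"
    using ic nonpos integral_le[OF _ integrable_0] by auto
  have "integral {c..d} f \<noteq> 0"
  proof
    assume "integral {c..d} f = 0"
    then have "((\<lambda>x. - f x) has_integral 0) (cbox c d)"
      using has_integral_neg[OF integrable_integral[OF ic(3)]] by simp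
    then have "- f x0 = 0"
      using cd x0 nonpos by (intro has_integral_0_cbox_imp_0[of c d "\<lambda>x. - f x"]) (auto intro!: continuous_intros cont)
    then show False using x0 by simp
  qed
  then show ?thesis using split nonpos_parts by linarith
qed

lemma Im_integral:
  fixes f :: "real \<Rightarrow> complex"
  assumes "f integrable_on S"
  shows "Im (integral S f) = integral S (\<lambda>x. Im (f x))"
  using has_integral_Im[OF integrable_integral[OF assms]] by (simp add: integral_unique)

lemma integrable_on_Im:
  fixes f :: "real \<Rightarrow> complex"
  assumes "f integrable_on S"
  shows "(\<lambda>x. Im (f x)) integrable_on S"
  using has_integral_Im[OF integrable_integral[OF assms]] by blast

subsection \<open>Discs rotate with every angular velocity\<close>

text \<open>On the unit disc the imaginary part of the velocity integrand at e^{it}, seen from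
  e^{i theta}, is this kernel evaluated at t - theta (up to the factor 1/(2 pi)).\<close>
definition disc_kernel :: "real \<Rightarrow> real \<Rightarrow> real" where
  "disc_kernel \<alpha> s = sin s / cmod (1 - cis s) powr \<alpha>"

lemma disc_kernel_periodic: "disc_kernel \<alpha> (s + 2*pi) = disc_kernel \<alpha> s"
  by (simp add: disc_kernel_def cis.ctr)

lemma disc_kernel_odd: "disc_kernel \<alpha> (- s) = - disc_kernel \<alpha> s"
proof -
  have "1 - cis (- s) = cnj (1 - cis s)" by (simp add: cis_cnj)
  then have "cmod (1 - cis (- s)) = cmod (1 - cis s)" by (metis complex_mod_cnj)
  then show ?thesis by (simp add: disc_kernel_def)
qed

lemma cmod_cis_diff: "cmod (cis a - cis t) = cmod (1 - cis (t - a))"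
proof -
  have "cis a - cis t = cis a * (1 - cis (t - a))" by (simp add: algebra_simps cis_mult)
  then show ?thesis by (simp add: norm_mult)
qed

lemma disc_integrand_Im:
  "Im (1 / complex_of_real (cmod (cis \<theta> - cis t) powr \<alpha>) * (\<i> * cis t) * (cnj (cis \<theta>) / (2 * of_real pi * \<i>)))
     = disc_kernel \<alpha> (t - \<theta>) / (2*pi)"
proof -
  have "1 / complex_of_real (cmod (cis \<theta> - cis t) powr \<alpha>) * (\<i> * cis t) * (cnj (cis \<theta>) / (2 * of_real pi * \<i>))
      = complex_of_real (1 / (2*pi * cmod (1 - cis (t - \<theta>)) powr \<alpha>)) * cis (t - \<theta>)"
    by (simp add: cmod_cis_diff field_simps cis_cnj cis_mult)
  then show ?thesis by (simp add: disc_kernel_def)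
qed

text \<open>The self-induced velocity of the unit disc is normal to the boundary: the integral term
  of G vanishes because the kernel is odd and periodic.\<close>
lemma disc_velocity_term_real:
  assumes \<theta>: "\<bar>\<theta>\<bar> \<le> pi"
  shows "Im (circle_integral (\<lambda>\<tau>. 1 / complex_of_real (cmod (cis \<theta> - \<tau>) powr \<alpha>))
            * (cnj (cis \<theta>) / (2 * of_real pi * \<i>))) = 0"
proof -
  define g where "g t = 1 / complex_of_real (cmod (cis \<theta> - cis t) powr \<alpha>) * (\<i> * cis t)
      * (cnj (cis \<theta>) / (2 * of_real pi * \<i>))" for t
  have "circle_integral (\<lambda>\<tau>. 1 / complex_of_real (cmod (cis \<theta> - \<tau>) powr \<alpha>))
      * (cnj (cis \<theta>) / (2 * of_real pi * \<i>)) = integral {0..2*pi} g"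
    unfolding g_def circle_integral_def by (rule integral_mult_left[symmetric])
  moreover have "Im (integral {0..2*pi} g) = 0"
  proof (cases "g integrable_on {0..2*pi}")
    case False
    then show ?thesis by (simp add: not_integrable_integral)
  next
    case True
    have Im_g: "(\<lambda>t. Im (g t)) = (\<lambda>t. disc_kernel \<alpha> (t - \<theta>) / (2*pi))"
      unfolding g_def disc_integrand_Im ..
    have "(\<lambda>t. disc_kernel \<alpha> (t - \<theta>) / (2*pi)) integrable_on {0..2*pi}"
      using integrable_on_Im[OF True] unfolding Im_g .
    then have shifted_int: "(\<lambda>t. disc_kernel \<alpha> (t - \<theta>)) integrable_on {0..2*pi}"
      using integrable_on_mult_left[of _ _ "2*pi"] by force
    have per: "disc_kernel \<alpha> (t + 2*pi - \<theta>) = disc_kernel \<alpha> (t - \<theta>)" for t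
      using disc_kernel_periodic[of \<alpha> "t - \<theta>"] by (simp add: algebra_simps)
    have "disc_kernel \<alpha> integrable_on {0..2*pi}
        \<and> integral {0..2*pi} (disc_kernel \<alpha>) = integral {0..2*pi} (\<lambda>t. disc_kernel \<alpha> (t - \<theta>))"
      using periodic_integral_translate[of "\<lambda>t. disc_kernel \<alpha> (t - \<theta>)" "2*pi" \<theta>, OF per] shifted_int \<theta>
      by simp
    then have "integral {0..2*pi} (\<lambda>t. disc_kernel \<alpha> (t - \<theta>)) = 0"
      using odd_periodic_integral_zero[of "disc_kernel \<alpha>" "2*pi", OF disc_kernel_periodic disc_kernel_odd] by simp
    then show ?thesis
      by (simp add: Im_integral[OF True] Im_g)
  qed
  ultimately show ?thesis by simp
qed

theorem disc_rotates:
  assumes w: "cmod w = 1"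
  shows "G \<alpha> \<Omega> id w = 0"
proof -
  define V where "V = circle_integral (\<lambda>\<tau>. 1 / complex_of_real (cmod (w - \<tau>) powr \<alpha>))
      * (cnj w / (2 * of_real pi * \<i>))"
  have "w \<noteq> 0" using w by auto
  then have w_cis: "w = cis (Arg w)"
    using cis_Arg[of w] w by (simp add: sgn_div_norm)
  have "\<bar>Arg w\<bar> \<le> pi" using Arg_bounded[of w] by auto
  then have "Im V = 0"
    using disc_velocity_term_real[of "Arg w" \<alpha>] unfolding V_def by (simp flip: w_cis)
  moreover have "Im (complex_of_real \<Omega> * w * cnj w) = 0"
    by (simp add: w complex_mult_cnj cmod_def)
  moreover have "G \<alpha> \<Omega> id w = Im (complex_of_real \<Omega> * w * cnj w - complex_of_real (C_alpha \<alpha>) * V)"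
    unfolding G_def V_def by (simp add: algebra_simps)
  ultimately show ?thesis by simp
qed

subsection \<open>The functional G on ellipses\<close>

text \<open>Powers of the two factors of the distance between boundary points of the ellipse,
  written in terms of cosines: for c = cos s, chord_powr gives the alpha-th power of the chord
  length of the unit circle, and for y = cos v, ecc_powr gives the alpha-th power of the modulus
  of 1 - Q e^{iv}.\<close>
definition chord_powr :: "real \<Rightarrow> real \<Rightarrow> real" where
  "chord_powr \<alpha> c = (2 - 2*c) powr (\<alpha>/2)"

definition ecc_powr :: "real \<Rightarrow> real \<Rightarrow> real \<Rightarrow> real" where
  "ecc_powr \<alpha> Q y = (1 - 2*Q*y + Q^2) powr (\<alpha>/2)"

definition ellipse_kernel :: "real \<Rightarrow> real \<Rightarrow> real \<Rightarrow> real \<Rightarrow> real" where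
  "ellipse_kernel \<alpha> Q s v = sin s / (chord_powr \<alpha> (cos s) * ecc_powr \<alpha> Q (cos v))"

text \<open>The integrand of the contour integral in G for the ellipse map, seen from the boundary
  point with parameter theta, as a function of the parameter t; and the factor
  conj(w) conj(phi'(w)) / (2 pi i) by which it is multiplied.\<close>
definition ellipse_integrand :: "real \<Rightarrow> real \<Rightarrow> real \<Rightarrow> real \<Rightarrow> complex" where
  "ellipse_integrand \<alpha> Q \<theta> t = (1 - complex_of_real Q * cis (- 2 * t))
     / complex_of_real (chord_powr \<alpha> (cos (t - \<theta>)) * ecc_powr \<alpha> Q (cos (t + \<theta>))) * (\<i> * cis t)"

definition ellipse_weight :: "real \<Rightarrow> real \<Rightarrow> complex" where
  "ellipse_weight Q \<theta> = cnj (cis \<theta>) * cnj (1 - complex_of_real Q * cis (- 2 * \<theta>)) / (2 * complex_of_real pi * \<i>)"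

lemma cmod_one_minus_cis_sq: "(cmod (1 - cis s))^2 = 2 - 2 * cos s"
proof -
  have "(cmod (1 - cis s))^2 = (1 - cos s)^2 + (sin s)^2"
    by (simp add: cmod_power2)
  also have "\<dots> = 2 - 2 * cos s" by (simp add: power2_eq_square algebra_simps sin_squared_eq)
  finally show ?thesis .
qed

lemma cmod_one_minus_Qcis_sq: "(cmod (1 - complex_of_real Q * cis v))^2 = 1 - 2*Q*cos v + Q^2"
proof -
  have "(cmod (1 - complex_of_real Q * cis v))^2 = (1 - Q * cos v)^2 + (Q * sin v)^2"
    by (simp add: cmod_power2)
  also have "\<dots> = 1 - 2*Q*cos v + Q^2"
    using sin_cos_squared_add[of v] by algebra
  finally show ?thesis .
qed

lemma ellipse_map_cis: "cis t + complex_of_real Q / cis t = cis t + complex_of_real Q * cis (- t)"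
  by (simp add: divide_inverse)

lemma ellipse_map_deriv_cis:
  "deriv (\<lambda>z. z + complex_of_real Q / z) (cis t) = 1 - complex_of_real Q * cis (- 2 * t)"
proof -
  have "((\<lambda>z. z + complex_of_real Q / z) has_field_derivative (1 - complex_of_real Q / (cis t)^2)) (at (cis t))"
    by (auto intro!: derivative_eq_intros simp: power2_eq_square field_simps)
  moreover have "(cis t)^2 = cis (2*t)" using Complex.DeMoivre[of t 2] by simp
  ultimately show ?thesis by (simp add: DERIV_imp_deriv divide_inverse)
qed

text \<open>The distance between two boundary points factors into a chord of the unit circle and
  a factor bounded below by 1 - Q.\<close>
lemma ellipse_map_diff:
  "(cis a + complex_of_real Q * cis (- a)) - (cis t + complex_of_real Q * cis (- t))
     = (cis a - cis t) * (1 - complex_of_real Q * cis (- (a + t)))"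
  by (simp add: algebra_simps cis_mult)

lemma ellipse_chord_powr:
  "cmod ((cis a + complex_of_real Q * cis (- a)) - (cis t + complex_of_real Q * cis (- t))) powr \<alpha>
     = chord_powr \<alpha> (cos (t - a)) * ecc_powr \<alpha> Q (cos (t + a))"
proof -
  have sqrt_powr: "sqrt x powr \<alpha> = x powr (\<alpha>/2)" if "0 \<le> x" for x :: real
    using that by (simp add: powr_half_sqrt[symmetric] powr_powr)
  have chord: "cmod (cis a - cis t) = sqrt (2 - 2 * cos (t - a))"
    using cmod_one_minus_cis_sq[of "t - a"] by (simp add: cmod_cis_diff real_sqrt_unique)
  have "cos (- (a + t)) = cos (t + a)" using cos_minus[of "a + t"] by (simp add: add.commute)
  then have ecc: "cmod (1 - complex_of_real Q * cis (- (a + t))) = sqrt (1 - 2*Q*cos (t + a) + Q^2)"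
    using cmod_one_minus_Qcis_sq[of Q "- (a + t)"] by (metis norm_ge_zero real_sqrt_unique)
  have "0 \<le> 1 - 2*Q*cos (t + a) + Q^2"
    using cmod_one_minus_Qcis_sq[of Q "t + a"] by (metis zero_le_power2)
  then show ?thesis
    unfolding ellipse_map_diff norm_mult chord ecc chord_powr_def ecc_powr_def
    by (simp add: powr_mult sqrt_powr)
qed

lemma ellipse_circle_integral:
  "circle_integral (\<lambda>\<tau>. deriv (\<lambda>z. z + complex_of_real Q / z) \<tau> /
        complex_of_real (cmod ((cis \<theta> + complex_of_real Q / cis \<theta>) - (\<tau> + complex_of_real Q / \<tau>)) powr \<alpha>))
   = integral {0..2*pi} (ellipse_integrand \<alpha> Q \<theta>)"
  unfolding circle_integral_def ellipse_map_cis ellipse_map_deriv_cis ellipse_chord_powr ellipse_integrand_def ..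

lemma Im_ellipse_integrand:
  "Im (ellipse_integrand \<alpha> Q \<theta> t * ellipse_weight Q \<theta>)
     = (1 - Q^2) / (2*pi) * ellipse_kernel \<alpha> Q (t - \<theta>) (t + \<theta>)"
proof -
  define d where "d = chord_powr \<alpha> (cos (t - \<theta>)) * ecc_powr \<alpha> Q (cos (t + \<theta>))"
  define N where "N = (cis t - complex_of_real Q * cis (- t)) * (cis (- \<theta>) - complex_of_real Q * cis \<theta>)"
  have "ellipse_integrand \<alpha> Q \<theta> t * ellipse_weight Q \<theta> = N / complex_of_real (2 * pi * d)"
  proof (cases "d = 0")
    case True
    then show ?thesis unfolding ellipse_integrand_def d_def[symmetric] by simp
  next
    case False
    have factors: "(1 - complex_of_real Q * cis (- 2 * t)) * cis t = cis t - complex_of_real Q * cis (- t)"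
      "cis (- \<theta>) * (1 - complex_of_real Q * cis (2 * \<theta>)) = cis (- \<theta>) - complex_of_real Q * cis \<theta>"
      by (simp_all add: algebra_simps cis_mult)
    have "ellipse_integrand \<alpha> Q \<theta> t * ellipse_weight Q \<theta>
        = (\<i> * ((1 - complex_of_real Q * cis (- 2 * t)) * cis t) / complex_of_real d)
          * ((cis (- \<theta>) * (1 - complex_of_real Q * cis (2 * \<theta>))) / (2 * complex_of_real pi * \<i>))"
      unfolding ellipse_integrand_def ellipse_weight_def d_def[symmetric] by (simp add: cis_cnj algebra_simps)
    also have "\<dots> = (\<i> * (cis t - complex_of_real Q * cis (- t)) / complex_of_real d)
        * ((cis (- \<theta>) - complex_of_real Q * cis \<theta>) / (2 * complex_of_real pi * \<i>))"
      unfolding factors ..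
    also have "\<dots> = N / complex_of_real (2 * pi * d)"
      using False unfolding N_def by (simp add: field_simps)
    finally show ?thesis .
  qed
  moreover have "Im N = (1 - Q^2) * sin (t - \<theta>)"
    unfolding N_def by (simp add: sin_diff algebra_simps power2_eq_square)
  ultimately show ?thesis
    by (simp add: Im_divide_of_real ellipse_kernel_def d_def)
qed

lemma Im_ellipse_rotation_term:
  "Im ((cis \<theta> + complex_of_real Q * cis (- \<theta>)) * cnj (cis \<theta>) * cnj (1 - complex_of_real Q * cis (- 2 * \<theta>)))
     = - 2 * Q * sin (2 * \<theta>)"
proof -
  have "(cis \<theta> + complex_of_real Q * cis (- \<theta>)) * cnj (cis \<theta>) * cnj (1 - complex_of_real Q * cis (- 2 * \<theta>))
      = 1 - complex_of_real Q * cis (2*\<theta>) + complex_of_real Q * cis (- 2 * \<theta>) - complex_of_real (Q^2)"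
    by (simp add: cis_cnj algebra_simps cis_mult power2_eq_square)
  then show ?thesis by simp
qed

lemma G_ellipse_formula:
  "G \<alpha> \<Omega> (\<lambda>z. z + complex_of_real Q / z) (cis \<theta>)
     = - 2 * Q * \<Omega> * sin (2*\<theta>)
       - C_alpha \<alpha> * Im (integral {0..2*pi} (\<lambda>t. ellipse_integrand \<alpha> Q \<theta> t * ellipse_weight Q \<theta>))"
proof -
  define X where "X = (cis \<theta> + complex_of_real Q * cis (- \<theta>)) * cnj (cis \<theta>) * cnj (1 - complex_of_real Q * cis (- 2 * \<theta>))"
  define I where "I = integral {0..2*pi} (ellipse_integrand \<alpha> Q \<theta>)"
  have "G \<alpha> \<Omega> (\<lambda>z. z + complex_of_real Q / z) (cis \<theta>)
      = Im (complex_of_real \<Omega> * X - complex_of_real (C_alpha \<alpha>) * (I * ellipse_weight Q \<theta>))"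
    unfolding G_def ellipse_circle_integral I_def[symmetric] X_def ellipse_weight_def
    by (simp add: ellipse_map_cis ellipse_map_deriv_cis algebra_simps)
  also have "\<dots> = \<Omega> * Im X - C_alpha \<alpha> * Im (I * ellipse_weight Q \<theta>)" by simp
  also have "Im X = - 2 * Q * sin (2 * \<theta>)" unfolding X_def by (rule Im_ellipse_rotation_term)
  finally show ?thesis unfolding I_def integral_mult_left by simp
qed

subsection \<open>Integrability of the velocity integrand on the ellipse\<close>

lemma sin_ge_x_cos:
  assumes "0 \<le> x" "x \<le> pi"
  shows "x * cos x \<le> sin x"
proof -
  have "(\<lambda>x. sin x - x * cos x) 0 \<le> (\<lambda>x. sin x - x * cos x) x"
  proof (rule DERIV_nonneg_imp_nondecreasing[OF assms(1)])
    fix y assume y: "0 \<le> y" "y \<le> x"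
    have "DERIV (\<lambda>x. sin x - x * cos x) y :> cos y - (cos y + y * (- sin y))"
      by (auto intro!: derivative_eq_intros)
    moreover have "cos y - (cos y + y * (- sin y)) \<ge> 0"
      using y assms sin_ge_zero[of y] by simp
    ultimately show "\<exists>d. DERIV (\<lambda>x. sin x - x * cos x) y :> d \<and> d \<ge> 0" by blast
  qed
  then show ?thesis by simp
qed

lemma sin_ge_quarter:
  assumes "0 \<le> x" "x \<le> pi/2"
  shows "x / 4 \<le> sin x"
proof (cases "x \<le> pi/3")
  case True
  have "cos (pi/3) \<le> cos x" using True assms by (intro cos_monotone_0_pi_le) auto
  then have "x * (1/2) \<le> x * cos x" using assms by (intro mult_left_mono) (auto simp: cos_60)
  then show ?thesis using sin_ge_x_cos[of x] assms by simp
next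
  case False
  have "sin (pi/6) \<le> sin x" using False assms by (intro sin_monotone_2pi_le) auto
  then have "1/2 \<le> sin x" by (simp add: sin_30)
  moreover have "x/4 \<le> 1/2" using assms pi_less_4 by simp
  ultimately show ?thesis by simp
qed

lemma cmod_one_minus_cis_ge:
  assumes "\<bar>s\<bar> \<le> pi"
  shows "\<bar>s\<bar> / 4 \<le> cmod (1 - cis s)"
proof -
  have "cos s = 1 - 2 * (sin (s/2))^2"
    using cos_double_sin[of "s/2"] by simp
  then have "(cmod (1 - cis s))^2 = (2 * \<bar>sin (s/2)\<bar>)^2"
    by (simp add: cmod_one_minus_cis_sq power_mult_distrib)
  then have chord: "cmod (1 - cis s) = 2 * \<bar>sin (s/2)\<bar>"
    by (rule power2_eq_imp_eq) auto
  have "\<bar>s/2\<bar> / 4 \<le> sin \<bar>s/2\<bar>" using assms by (intro sin_ge_quarter) auto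
  moreover have "sin \<bar>s/2\<bar> = \<bar>sin (s/2)\<bar>"
    by (cases "s \<ge> 0") (use assms sin_ge_zero[of "\<bar>s/2\<bar>"] in auto)
  ultimately show ?thesis using chord by simp
qed

lemma cmod_one_minus_Qcis_ge:
  assumes "0 \<le> Q"
  shows "1 - Q \<le> cmod (1 - complex_of_real Q * cis v)"
  using norm_triangle_ineq2[of 1 "complex_of_real Q * cis v"] assms by (simp add: norm_mult)

lemma ecc_base_pos:
  fixes Q y :: real
  assumes "0 \<le> Q" "Q < 1" "\<bar>y\<bar> \<le> 1"
  shows "0 < 1 - 2*Q*y + Q^2"
proof -
  have "Q * y \<le> Q" using assms by (simp add: abs_le_iff mult_left_le)
  moreover have "0 < (1 - Q)^2" using assms by simp
  ultimately show ?thesis by (simp add: power2_eq_square algebra_simps)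
qed

lemma abs_powr_integrable:
  fixes a r :: real
  assumes "-1 < a" "0 \<le> r"
  shows "(\<lambda>x. \<bar>x\<bar> powr a) integrable_on {-r..r}"
proof -
  have "(\<lambda>x. x powr a) integrable_on {0..r}"
    using integrable_on_powr_from_0[OF assms] .
  then have right: "(\<lambda>x. \<bar>x\<bar> powr a) integrable_on {0..r}"
    by (rule integrable_eq) auto
  then have "(\<lambda>x. \<bar>- x\<bar> powr a) integrable_on {-r..-0}"
    using Henstock_Kurzweil_Integration.integrable_reflect_real[of "\<lambda>x. \<bar>x\<bar> powr a" r 0] by simp
  then have left: "(\<lambda>x. \<bar>x\<bar> powr a) integrable_on {-r..0}" by simp
  show ?thesis
    by (rule Henstock_Kurzweil_Integration.integrable_combine[OF _ _ left right]) (use assms in auto)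
qed

lemma ellipse_integrand_bound:
  assumes \<alpha>: "0 < \<alpha>" and Q: "0 \<le> Q" "Q < 1" and t: "\<bar>t - \<theta>\<bar> \<le> pi"
  shows "norm (ellipse_integrand \<alpha> Q \<theta> t) \<le> 2 * ((1 - Q)/4) powr (- \<alpha>) * \<bar>t - \<theta>\<bar> powr (- \<alpha>)"
proof (cases "t = \<theta>")
  case True
  then show ?thesis using \<alpha> by (simp add: ellipse_integrand_def chord_powr_def)
next
  case False
  define m where "m = (1 - Q)/4"
  have m: "0 < m" using Q by (simp add: m_def)
  define D where "D = chord_powr \<alpha> (cos (t - \<theta>)) * ecc_powr \<alpha> Q (cos (t + \<theta>))"
  have pos: "0 < \<bar>t - \<theta>\<bar>" using False by simp
  have "m * \<bar>t - \<theta>\<bar> = (\<bar>t - \<theta>\<bar> / 4) * (1 - Q)" by (simp add: m_def)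
  also have "\<dots> \<le> cmod (cis \<theta> - cis t) * cmod (1 - complex_of_real Q * cis (- (\<theta> + t)))"
    using cmod_one_minus_cis_ge[OF t] cmod_one_minus_Qcis_ge[OF Q(1)] Q
    by (intro mult_mono) (auto simp: cmod_cis_diff)
  finally have "(m * \<bar>t - \<theta>\<bar>) powr \<alpha> \<le> D"
    unfolding D_def ellipse_chord_powr[symmetric] ellipse_map_diff norm_mult
    using m pos \<alpha> by (intro powr_mono2) auto
  moreover have "0 < (m * \<bar>t - \<theta>\<bar>) powr \<alpha>" using m pos by simp
  moreover have "norm (1 - complex_of_real Q * cis (- 2 * t)) \<le> 2"
    using norm_triangle_ineq4[of 1 "complex_of_real Q * cis (- 2 * t)"] Q by (simp add: norm_mult)
  ultimately have "norm (ellipse_integrand \<alpha> Q \<theta> t) \<le> 2 / (m * \<bar>t - \<theta>\<bar>) powr \<alpha>"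
    unfolding ellipse_integrand_def D_def[symmetric]
    by (simp add: norm_mult norm_divide frac_le)
  also have "\<dots> = 2 * m powr (- \<alpha>) * \<bar>t - \<theta>\<bar> powr (- \<alpha>)"
    using m pos by (simp add: powr_mult powr_minus divide_inverse)
  finally show ?thesis unfolding m_def .
qed

text \<open>The integrand is 2 pi-periodic, measurable, and dominated near t = theta by an
  integrable singularity; hence it is integrable over every period.\<close>
lemma ellipse_integrand_periodic: "ellipse_integrand \<alpha> Q \<theta> (t + 2*pi) = ellipse_integrand \<alpha> Q \<theta> t"
proof -
  have "cos (t + 2*pi - \<theta>) = cos (t - \<theta>)" "cos (t + 2*pi + \<theta>) = cos (t + \<theta>)"
    using cos_periodic[of "t - \<theta>"] cos_periodic[of "t + \<theta>"] by (simp_all add: algebra_simps)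
  moreover have cis_periodic: "cis (x + 2*pi) = cis x" for x
    by (simp add: cis_mult[symmetric])
  moreover have "cis (- 2 * (t + 2*pi)) = cis (- 2 * t)"
    using cis_periodic[of "- 2 * (t + 2*pi)"] cis_periodic[of "- 2 * (t + 2*pi) + 2*pi"]
    by (simp add: algebra_simps)
  ultimately show ?thesis unfolding ellipse_integrand_def by simp
qed

lemma ellipse_integrand_integrable:
  assumes \<alpha>: "0 < \<alpha>" "\<alpha> < 1" and Q: "0 \<le> Q" "Q < 1" and \<theta>: "0 \<le> \<theta>" "\<theta> \<le> pi"
  shows "ellipse_integrand \<alpha> Q \<theta> integrable_on {0..2*pi}"
proof -
  define S where "S = {\<theta> - pi..\<theta> + pi}"
  have "continuous_on S (\<lambda>t. chord_powr \<alpha> (cos (t - \<theta>)))"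
    unfolding chord_powr_def using \<alpha> by (intro continuous_on_powr') (auto intro!: continuous_intros)
  moreover have "continuous_on S (\<lambda>t. ecc_powr \<alpha> Q (cos (t + \<theta>)))"
    unfolding ecc_powr_def using ecc_base_pos[OF Q] \<alpha>
    by (intro continuous_on_powr') (auto intro!: continuous_intros simp: less_imp_le)
  ultimately have meas: "ellipse_integrand \<alpha> Q \<theta> \<in> borel_measurable (lebesgue_on S)"
    unfolding ellipse_integrand_def S_def
    by (intro borel_measurable_times borel_measurable_divide continuous_imp_measurable_on_sets_lebesgue)
       (auto intro!: continuous_intros)
  define g where "g t = 2 * ((1 - Q)/4) powr (- \<alpha>) * \<bar>t - \<theta>\<bar> powr (- \<alpha>)" for t
  have "(\<lambda>x. 2 * ((1 - Q)/4) powr (- \<alpha>) * \<bar>x\<bar> powr (- \<alpha>)) integrable_on {-pi..pi}"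
    using integrable_on_mult_right[OF abs_powr_integrable[of "- \<alpha>" pi]] \<alpha> by simp
  then have "(\<lambda>x. g (x + \<theta>)) integrable_on {(\<theta> - pi) - \<theta>..(\<theta> + pi) - \<theta>}"
    unfolding g_def by simp
  then have "g integrable_on S" unfolding S_def by (rule integrable_shift_real_ivl_iff[THEN iffD1])
  moreover have "\<And>t. t \<in> S \<Longrightarrow> norm (ellipse_integrand \<alpha> Q \<theta> t) \<le> g t"
    unfolding g_def S_def using ellipse_integrand_bound[OF \<alpha>(1) Q] by (auto simp: abs_le_iff)
  ultimately have "ellipse_integrand \<alpha> Q \<theta> integrable_on {\<theta> - pi..\<theta> - pi + 2*pi}"
    using measurable_bounded_by_integrable_imp_integrable[OF meas] unfolding S_def
    by (simp add: algebra_simps)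
  then show ?thesis
    using periodic_integral_window[of "ellipse_integrand \<alpha> Q \<theta>" "2*pi" "\<theta> - pi" 0,
        OF ellipse_integrand_periodic] \<theta> by simp
qed

lemma ellipse_kernel_periodic: "ellipse_kernel \<alpha> Q (s + 2*pi) (v + 2*pi) = ellipse_kernel \<alpha> Q s v"
  by (simp add: ellipse_kernel_def)

lemma G_ellipse:
  assumes \<alpha>: "0 < \<alpha>" "\<alpha> < 1" and Q: "0 \<le> Q" "Q < 1" and \<theta>: "0 \<le> \<theta>" "\<theta> \<le> pi"
  shows "(\<lambda>s. ellipse_kernel \<alpha> Q s (s + 2*\<theta>)) integrable_on {0..2*pi}
    \<and> G \<alpha> \<Omega> (\<lambda>z. z + complex_of_real Q / z) (cis \<theta>)
      = - 2 * Q * \<Omega> * sin (2*\<theta>)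
        - C_alpha \<alpha> * ((1 - Q^2) / (2*pi) * integral {0..2*pi} (\<lambda>s. ellipse_kernel \<alpha> Q s (s + 2*\<theta>)))"
proof -
  define K where "K = (1 - Q^2) / (2*pi)"
  define h where "h t = ellipse_kernel \<alpha> Q (t - \<theta>) (t + \<theta>)" for t
  have "Q * Q < 1 * 1" using Q by (intro mult_strict_mono') auto
  then have K: "K \<noteq> 0" unfolding K_def by (simp add: power2_eq_square)
  have int: "(\<lambda>t. ellipse_integrand \<alpha> Q \<theta> t * ellipse_weight Q \<theta>) integrable_on {0..2*pi}"
    by (rule integrable_on_mult_left[OF ellipse_integrand_integrable[OF \<alpha> Q \<theta>]])
  have Im_eq: "(\<lambda>t. Im (ellipse_integrand \<alpha> Q \<theta> t * ellipse_weight Q \<theta>)) = (\<lambda>t. K * h t)"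
    unfolding Im_ellipse_integrand K_def h_def ..
  then have "(\<lambda>t. K * h t) integrable_on {0..2*pi}"
    using integrable_on_Im[OF int] by simp
  then have h_int: "h integrable_on {0..2*pi}"
    using integrable_on_mult_right[of "\<lambda>t. K * h t" _ "1/K"] K by simp
  have "h (x + 2*pi) = h x" for x
    using ellipse_kernel_periodic[of \<alpha> Q "x - \<theta>" "x + \<theta>"] unfolding h_def by (simp add: algebra_simps)
  then have "(\<lambda>x. h (x + \<theta>)) integrable_on {0..2*pi} \<and> integral {0..2*pi} (\<lambda>x. h (x + \<theta>)) = integral {0..2*pi} h"
    using periodic_integral_translate[of h "2*pi" \<theta>] h_int \<theta> by simp
  moreover have "(\<lambda>x. h (x + \<theta>)) = (\<lambda>s. ellipse_kernel \<alpha> Q s (s + 2*\<theta>))"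
    unfolding h_def by (simp add: algebra_simps)
  moreover have "Im (integral {0..2*pi} (\<lambda>t. ellipse_integrand \<alpha> Q \<theta> t * ellipse_weight Q \<theta>))
      = K * integral {0..2*pi} h"
    unfolding Im_integral[OF int] Im_eq by simp
  ultimately show ?thesis unfolding G_ellipse_formula K_def by simp
qed

subsection \<open>Sign of the symmetrized kernel\<close>

definition ecc_sym :: "real \<Rightarrow> real \<Rightarrow> real \<Rightarrow> real" where
  "ecc_sym \<alpha> Q y = 1 / ecc_powr \<alpha> Q y + 1 / ecc_powr \<alpha> Q (- y)"

lemma ecc_sym_even: "ecc_sym \<alpha> Q (- y) = ecc_sym \<alpha> Q y"
  by (simp add: ecc_sym_def)

lemma has_real_derivative_affine_powr:
  fixes a b c y :: real
  assumes "0 < a + b * y"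
  shows "((\<lambda>y. (a + b * y) powr c) has_real_derivative (b * c) * (a + b * y) powr (c - 1)) (at y)"
  using assms by (auto intro!: derivative_eq_intros simp: powr_diff field_simps)

text \<open>Strict monotonicity on [0, 1], by the mean value theorem: the derivative is
  alpha Q ((1 + Q^2 - 2Qy)^(c-1) - (1 + Q^2 + 2Qy)^(c-1)) with c - 1 < 0, positive for y > 0.\<close>
lemma ecc_sym_strict_mono:
  fixes \<alpha> Q p q :: real
  assumes \<alpha>: "0 < \<alpha>" and Q: "0 < Q" "Q < 1" and pq: "0 \<le> p" "p < q" "q \<le> 1"
  shows "ecc_sym \<alpha> Q p < ecc_sym \<alpha> Q q"
proof -
  define c where "c = - (\<alpha>/2)"
  define A where "A y = (1 + Q^2) + (- 2*Q) * y" for y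
  define B where "B y = (1 + Q^2) + (2*Q) * y" for y
  define D where "D y = (- 2*Q*c) * A y powr (c - 1) + (2*Q*c) * B y powr (c - 1)" for y
  have sym: "ecc_sym \<alpha> Q y = A y powr c + B y powr c" for y
    unfolding A_def B_def c_def by (simp add: ecc_sym_def ecc_powr_def powr_minus_divide algebra_simps)
  have pos: "0 < A y" "0 < B y" if "\<bar>y\<bar> \<le> 1" for y
    using ecc_base_pos[of Q y] ecc_base_pos[of Q "- y"] Q that unfolding A_def B_def
    by (simp_all add: algebra_simps)
  have deriv: "DERIV (ecc_sym \<alpha> Q) x :> D x" if "p \<le> x" "x \<le> q" for x
    using has_real_derivative_affine_powr[of "1 + Q^2" "- 2*Q" x c]
      has_real_derivative_affine_powr[of "1 + Q^2" "2*Q" x c] pos[of x] that pq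
    unfolding sym[abs_def] A_def B_def D_def by (auto intro!: derivative_eq_intros)
  obtain z where z: "p < z" "z < q" and mvt: "ecc_sym \<alpha> Q q - ecc_sym \<alpha> Q p = (q - p) * D z"
    using MVT2[OF pq(2) deriv] by blast
  have "B z powr (c - 1) < A z powr (c - 1)"
    using pos[of z] z pq Q \<alpha> unfolding A_def B_def c_def by (intro powr_less_mono2_neg) auto
  moreover have "D z = (Q * \<alpha>) * (A z powr (c - 1) - B z powr (c - 1))"
    unfolding D_def c_def by (simp add: algebra_simps)
  ultimately have "0 < D z" using Q \<alpha> by simp
  then have "0 < (q - p) * D z" using z by simp
  then show ?thesis using mvt by simp
qed

lemma ecc_sym_mono:
  fixes \<alpha> Q p q :: real
  assumes \<alpha>: "0 < \<alpha>" and Q: "0 < Q" "Q < 1" and pq: "\<bar>p\<bar> \<le> \<bar>q\<bar>" "\<bar>q\<bar> \<le> 1"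
  shows "ecc_sym \<alpha> Q p \<le> ecc_sym \<alpha> Q q"
proof -
  have "ecc_sym \<alpha> Q \<bar>p\<bar> \<le> ecc_sym \<alpha> Q \<bar>q\<bar>"
    using ecc_sym_strict_mono[OF \<alpha> Q, of "\<bar>p\<bar>" "\<bar>q\<bar>"] pq by (cases "\<bar>p\<bar> = \<bar>q\<bar>") auto
  then show ?thesis by (simp add: abs_if ecc_sym_even split: if_splits)
qed

text \<open>The sum of the two ellipse kernels occurring at theta = pi/8 and theta = 5 pi/8, and the sum of
  its translates under the symmetries of the square, written in factored form.\<close>
definition paired_kernel :: "real \<Rightarrow> real \<Rightarrow> real \<Rightarrow> real" where
  "paired_kernel \<alpha> Q s = ellipse_kernel \<alpha> Q s (s + pi/4) + ellipse_kernel \<alpha> Q s (s + 5*pi/4)"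

definition symmetrized_kernel :: "real \<Rightarrow> real \<Rightarrow> real \<Rightarrow> real" where
  "symmetrized_kernel \<alpha> Q s = sin s * (1 / chord_powr \<alpha> (cos s) - 1 / chord_powr \<alpha> (- cos s))
      * (ecc_sym \<alpha> Q (cos (s + pi/4)) - ecc_sym \<alpha> Q (cos (s - pi/4)))"

lemma paired_kernel_periodic: "paired_kernel \<alpha> Q (s + 2*pi) = paired_kernel \<alpha> Q s"
proof -
  have "s + 2*pi + pi/4 = (s + pi/4) + 2*pi" "s + 2*pi + 5*pi/4 = (s + 5*pi/4) + 2*pi" by simp_all
  then show ?thesis unfolding paired_kernel_def by (simp only: ellipse_kernel_periodic)
qed

lemma paired_kernel_eq: "paired_kernel \<alpha> Q s = sin s / chord_powr \<alpha> (cos s) * ecc_sym \<alpha> Q (cos (s + pi/4))"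
proof -
  have "s + 5*pi/4 = (s + pi/4) + pi" by simp
  then have antipode: "cos (s + 5*pi/4) = - cos (s + pi/4)" by (simp only: cos_periodic_pi)
  have factor: "x / (P * a) + x / (P * b) = x / P * (1 / a + 1 / b)" for x P a b :: real
    by (simp add: divide_inverse distrib_left)
  show ?thesis
    unfolding paired_kernel_def ellipse_kernel_def ecc_sym_def antipode by (rule factor)
qed

lemma paired_kernel_symmetrize:
  "paired_kernel \<alpha> Q s + paired_kernel \<alpha> Q (- s) + paired_kernel \<alpha> Q (pi - s) + paired_kernel \<alpha> Q (s + pi)
     = symmetrized_kernel \<alpha> Q s"
proof -
  have reflect: "cos (- s + pi/4) = cos (s - pi/4)"
    by (metis cos_minus minus_diff_eq uminus_add_conv_diff add.commute)
  have "pi - s + pi/4 = - ((s - pi/4) + pi) + 2*pi" by simp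
  then have rotate: "cos (pi - s + pi/4) = - cos (s - pi/4)"
    by (simp only: cos_periodic cos_minus cos_periodic_pi)
  have "s + pi + pi/4 = (s + pi/4) + pi" by simp
  then have antipode: "cos (s + pi + pi/4) = - cos (s + pi/4)"
    by (simp only: cos_periodic_pi)
  have factor: "x / P1 * E1 + - x / P1 * E2 + x / P2 * E2 + - x / P2 * E1 = x * (1 / P1 - 1 / P2) * (E1 - E2)"
    for x P1 P2 E1 E2 :: real
    by (simp add: divide_inverse algebra_simps)
  show ?thesis
    unfolding paired_kernel_eq reflect rotate antipode sin_minus cos_minus sin_pi_minus cos_pi_minus
      sin_periodic_pi cos_periodic_pi ecc_sym_even symmetrized_kernel_def
    by (rule factor)
qed

lemma chord_factor_sign:
  assumes \<alpha>: "0 < \<alpha>" and c: "\<bar>c\<bar> < 1"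
  shows "0 \<le> (1 / chord_powr \<alpha> c - 1 / chord_powr \<alpha> (- c)) * c"
proof -
  have pos: "0 < chord_powr \<alpha> c" "0 < chord_powr \<alpha> (- c)"
    unfolding chord_powr_def using c by auto
  show ?thesis
  proof (cases "0 \<le> c")
    case True
    have "chord_powr \<alpha> c \<le> chord_powr \<alpha> (- c)"
      unfolding chord_powr_def using True c \<alpha> by (intro powr_mono2) auto
    then show ?thesis using True pos by (simp add: frac_le)
  next
    case False
    have "chord_powr \<alpha> (- c) \<le> chord_powr \<alpha> c"
      unfolding chord_powr_def using False c \<alpha> by (intro powr_mono2) auto
    then show ?thesis using False pos by (simp add: frac_le mult_nonpos_nonpos)
  qed
qed

text \<open>Which of cos(s + pi/4) and cos(s - pi/4) is larger in modulus is decided by the sign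
  of sin s cos s.\<close>
lemma cos_quarter_pi_sq:
  "(cos (s + pi/4))^2 = (1 - 2 * sin s * cos s) / 2"
  "(cos (s - pi/4))^2 = (1 + 2 * sin s * cos s) / 2"
  by (simp_all add: cos_add cos_diff cos_45 sin_45 power2_eq_square algebra_simps sin_squared_eq)

lemma ecc_factor_sign:
  assumes \<alpha>: "0 < \<alpha>" and Q: "0 < Q" "Q < 1"
  shows "(ecc_sym \<alpha> Q (cos (s + pi/4)) - ecc_sym \<alpha> Q (cos (s - pi/4))) * (sin s * cos s) \<le> 0"
proof (cases "0 \<le> sin s * cos s")
  case True
  then have "\<bar>cos (s + pi/4)\<bar> \<le> \<bar>cos (s - pi/4)\<bar>"
    by (simp add: abs_le_square_iff cos_quarter_pi_sq)
  then have "ecc_sym \<alpha> Q (cos (s + pi/4)) - ecc_sym \<alpha> Q (cos (s - pi/4)) \<le> 0"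
    using ecc_sym_mono[OF \<alpha> Q, of "cos (s + pi/4)" "cos (s - pi/4)"] by simp
  then show ?thesis using True by (rule mult_nonpos_nonneg)
next
  case False
  then have "\<bar>cos (s - pi/4)\<bar> \<le> \<bar>cos (s + pi/4)\<bar>"
    by (simp add: abs_le_square_iff cos_quarter_pi_sq mult.commute)
  then have "0 \<le> ecc_sym \<alpha> Q (cos (s + pi/4)) - ecc_sym \<alpha> Q (cos (s - pi/4))"
    using ecc_sym_mono[OF \<alpha> Q, of "cos (s - pi/4)" "cos (s + pi/4)"] by simp
  moreover have "sin s * cos s \<le> 0" using False by simp
  ultimately show ?thesis by (rule mult_nonneg_nonpos)
qed

lemma symmetrized_kernel_nonpos:
  assumes \<alpha>: "0 < \<alpha>" and Q: "0 < Q" "Q < 1"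
  shows "symmetrized_kernel \<alpha> Q s \<le> 0"
proof (cases "sin s = 0 \<or> cos s = 0")
  case True
  then show ?thesis by (auto simp: symmetrized_kernel_def)
next
  case False
  define A where "A = 1 / chord_powr \<alpha> (cos s) - 1 / chord_powr \<alpha> (- cos s)"
  define E where "E = ecc_sym \<alpha> Q (cos (s + pi/4)) - ecc_sym \<alpha> Q (cos (s - pi/4))"
  have "0 < (sin s)^2" using False by simp
  then have "(cos s)^2 < 1" using sin_cos_squared_add[of s] by linarith
  then have cos_lt: "\<bar>cos s\<bar> < 1" by (simp add: abs_square_less_1)
  have "symmetrized_kernel \<alpha> Q s * (cos s)^2 = (A * cos s) * (E * (sin s * cos s))"
    unfolding symmetrized_kernel_def A_def E_def by (simp add: power2_eq_square algebra_simps)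
  also have "\<dots> \<le> 0"
    using chord_factor_sign[OF \<alpha> cos_lt] ecc_factor_sign[OF \<alpha> Q, of s]
    unfolding A_def E_def by (simp add: mult_nonneg_nonpos)
  finally show ?thesis using False by (simp add: mult_le_0_iff)
qed

lemma symmetrized_kernel_neg:
  assumes \<alpha>: "0 < \<alpha>" and Q: "0 < Q" "Q < 1"
  shows "symmetrized_kernel \<alpha> Q (pi/4) < 0"
proof -
  have half: "sqrt 2 / 2 < 1" by (simp add: real_sqrt_less_iff[of 2 4, simplified])
  have "chord_powr \<alpha> (sqrt 2 / 2) < chord_powr \<alpha> (- (sqrt 2 / 2))"
    unfolding chord_powr_def using \<alpha> half by (intro powr_less_mono2) auto
  moreover have "0 < chord_powr \<alpha> (sqrt 2 / 2)" unfolding chord_powr_def using half by simp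
  ultimately have "0 < 1 / chord_powr \<alpha> (sqrt 2 / 2) - 1 / chord_powr \<alpha> (- (sqrt 2 / 2))"
    by (simp add: frac_less2)
  moreover have "ecc_sym \<alpha> Q 0 < ecc_sym \<alpha> Q 1" using ecc_sym_strict_mono[OF \<alpha> Q, of 0 1] by simp
  moreover have "cos (pi/4 + pi/4) = 0" "cos (pi/4 - pi/4) = 1" by simp_all
  ultimately show ?thesis
    by (simp add: symmetrized_kernel_def cos_45 sin_45 mult_pos_neg)
qed

lemma symmetrized_kernel_continuous:
  assumes Q: "0 < Q" "Q < 1"
  shows "continuous_on {pi/8..3*pi/8} (symmetrized_kernel \<alpha> Q)"
proof -
  have cos_bounds: "0 < cos s" "cos s < 1" if "s \<in> {pi/8..3*pi/8}" for s
  proof -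
    have s: "pi/8 \<le> s" "s \<le> 3*pi/8" using that by auto
    have "cos s < cos 0" using s pi_gt_zero by (intro cos_monotone_0_pi) linarith+
    then show "cos s < 1" by simp
    show "0 < cos s" using s pi_gt_zero by (intro cos_gt_zero_pi) linarith+
  qed
  have ecc_nonzero: "1 - 2 * Q * cos x + Q^2 \<noteq> 0" "1 - 2 * Q * - cos x + Q^2 \<noteq> 0" for x
    using ecc_base_pos[of Q "cos x"] ecc_base_pos[of Q "- cos x"] Q abs_cos_le_one[of x] by auto
  show ?thesis
    unfolding symmetrized_kernel_def ecc_sym_def chord_powr_def ecc_powr_def
    by (intro continuous_intros) (use cos_bounds ecc_nonzero in \<open>fastforce simp: powr_eq_0_iff\<close>)+
qed

subsection \<open>Non-circular ellipses do not rotate\<close>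

lemma C_alpha_pos:
  assumes "0 < \<alpha>" "\<alpha> < 2"
  shows "0 < C_alpha \<alpha>"
  unfolding C_alpha_def using assms by (intro divide_pos_pos mult_pos_pos Gamma_real_pos) auto

text \<open>If the ellipse rotated with angular velocity Omega, then adding the equations
  G = 0 at theta = pi/8 and theta = 5 pi/8 eliminates Omega and forces the paired kernel
  to have integral zero.\<close>
lemma paired_kernel_integral_zero:
  assumes \<alpha>: "0 < \<alpha>" "\<alpha> < 1" and Q: "0 < Q" "Q < 1"
    and rotating: "\<forall>w. cmod w = 1 \<longrightarrow> G \<alpha> \<Omega> (\<lambda>z. z + complex_of_real Q / z) w = 0"
  shows "paired_kernel \<alpha> Q integrable_on {0..2*pi} \<and> integral {0..2*pi} (paired_kernel \<alpha> Q) = 0"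
proof -
  define R1 where "R1 = integral {0..2*pi} (\<lambda>s. ellipse_kernel \<alpha> Q s (s + pi/4))"
  define R2 where "R2 = integral {0..2*pi} (\<lambda>s. ellipse_kernel \<alpha> Q s (s + 5*pi/4))"
  define K where "K = C_alpha \<alpha> * ((1 - Q^2) / (2*pi))"
  have "Q * Q < 1 * 1" using Q by (intro mult_strict_mono') auto
  then have K: "0 < K"
    unfolding K_def using C_alpha_pos[of \<alpha>] \<alpha> by (intro mult_pos_pos) (auto simp: power2_eq_square)
  note at_pi_8 = G_ellipse[OF \<alpha> less_imp_le[OF Q(1)] Q(2), of "pi/8" \<Omega>]
  note at_5pi_8 = G_ellipse[OF \<alpha> less_imp_le[OF Q(1)] Q(2), of "5*pi/8" \<Omega>]
  have "sin (5*pi/4) = - sin (pi/4)"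
    using sin_periodic_pi[of "pi/4"] by (simp add: add_divide_distrib)
  moreover have "G \<alpha> \<Omega> (\<lambda>z. z + complex_of_real Q / z) (cis \<theta>) = 0" for \<theta>
    using rotating by simp
  ultimately have "0 = - 2 * Q * \<Omega> * sin (pi/4) - K * R1" "0 = 2 * Q * \<Omega> * sin (pi/4) - K * R2"
    using at_pi_8 at_5pi_8 unfolding R1_def R2_def K_def by (simp_all add: mult.assoc)
  then have "K * (R1 + R2) = 0" by (simp add: algebra_simps)
  then have "R1 + R2 = 0" using K by simp
  moreover have "(\<lambda>s. ellipse_kernel \<alpha> Q s (s + pi/4)) integrable_on {0..2*pi}"
    "(\<lambda>s. ellipse_kernel \<alpha> Q s (s + 5*pi/4)) integrable_on {0..2*pi}"
    using at_pi_8 at_5pi_8 by simp_all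
  ultimately show ?thesis
    unfolding paired_kernel_def[abs_def] R1_def R2_def by (simp add: integral_add integrable_add)
qed

lemma symmetrized_kernel_integral_neg:
  assumes \<alpha>: "0 < \<alpha>" and Q: "0 < Q" "Q < 1"
    and int: "symmetrized_kernel \<alpha> Q integrable_on {0..2*pi}"
  shows "integral {0..2*pi} (symmetrized_kernel \<alpha> Q) < 0"
  by (rule integral_neg_if_nonpos_and_neg_somewhere[OF int, of "pi/8" "3*pi/8" "pi/4"])
     (use symmetrized_kernel_nonpos[OF \<alpha> Q] symmetrized_kernel_continuous[OF Q]
        symmetrized_kernel_neg[OF \<alpha> Q] pi_gt_zero in auto)

theorem ellipse_not_rotating:
  assumes \<alpha>: "0 < \<alpha>" "\<alpha> < 1" and Q: "0 < Q" "Q < 1"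
  shows "\<not> (\<exists>\<Omega>. \<forall>w. cmod w = 1 \<longrightarrow> G \<alpha> \<Omega> (\<lambda>z. z + complex_of_real Q / z) w = 0)"
proof
  assume "\<exists>\<Omega>. \<forall>w. cmod w = 1 \<longrightarrow> G \<alpha> \<Omega> (\<lambda>z. z + complex_of_real Q / z) w = 0"
  then obtain \<Omega> where "\<forall>w. cmod w = 1 \<longrightarrow> G \<alpha> \<Omega> (\<lambda>z. z + complex_of_real Q / z) w = 0" ..
  then have paired: "paired_kernel \<alpha> Q integrable_on {0..2*pi}" "integral {0..2*pi} (paired_kernel \<alpha> Q) = 0"
    using paired_kernel_integral_zero[OF \<alpha> Q] by auto
  have "symmetrized_kernel \<alpha> Q integrable_on {0..2*pi} \<and> integral {0..2*pi} (symmetrized_kernel \<alpha> Q) = 0"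
    using periodic_integral_symmetrize[OF paired_kernel_periodic paired(1)] paired(2)
    unfolding paired_kernel_symmetrize by simp
  then show False
    using symmetrized_kernel_integral_neg[OF \<alpha>(1) Q] by simp
qed

theorem proposition5p1:
  fixes \<alpha> :: real
  assumes "0 < \<alpha>" and "\<alpha> < 1"
  shows "(\<forall>\<Omega>::real. \<forall>w::complex. cmod w = 1 \<longrightarrow> G \<alpha> \<Omega> id w = 0)
       \<and> (\<forall>Q::real. 0 < Q \<and> Q < 1 \<longrightarrow>
            \<not> (\<exists>\<Omega>::real. \<forall>w::complex. cmod w = 1 \<longrightarrow>
                   G \<alpha> \<Omega> (\<lambda>z. z + of_real Q / z) w = 0))"
  using disc_rotates ellipse_not_rotating[OF assms] by blast

end
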